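(* Let $q=2$ and $2\leq z\leq 4$. Consider the mean-field equation in $u\in[0,1)$, $$u=\frac{1-\exp(\Delta_{\beta,2,z}(u))}{1+\exp(\Delta_{\beta,2,z}(u))},\qquad\Delta_{\beta,2,z}(u):=-\frac{\beta}{2^{z-1}}\Big[(1+u)^{z-1}-(1-u)^{z-1}\Big].$$ There exists a single $\beta_1(2,z)>0$ such that for $0<\beta\leq\beta_1$ the mean-field equation has only the trivial solution $u=0$, and for $\beta>\beta_1$ it has exactly one additional solution $0<u_1<1$. *)

theory Defs
  imports Complex_Main
begin

definition Delta2 :: "real \<Rightarrow> real \<Rightarrow> real \<Rightarrow> real" where
  "Delta2 \<beta> z u = - (\<beta> / (2 powr (z - 1))) * ((1 + u) powr (z - 1) - (1 - u) powr (z - 1))"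

definition mf_eq2 :: "real \<Rightarrow> real \<Rightarrow> real \<Rightarrow> bool" where
  "mf_eq2 \<beta> z u \<longleftrightarrow> u = (1 - exp (Delta2 \<beta> z u)) / (1 + exp (Delta2 \<beta> z u))"

end

theory Submission
  imports Defs
begin

text \<open>
  With \<open>a = z - 1\<close> and \<open>c = \<beta> / 2 powr a\<close>, the mean-field equation on \<open>(-1, 1)\<close> says that
  the potential \<open>\<phi>(u) = c ((1+u) powr a - (1-u) powr a) - ln (1+u) + ln (1-u)\<close> vanishes.
  Its derivative is \<open>(c a \<psi>(u) - 2) / (1 - u\<^sup>2)\<close> with
  \<open>\<psi>(u) = (1-u\<^sup>2) ((1+u) powr (a-1) + (1-u) powr (a-1))\<close>, and \<open>\<psi>\<close> strictly decreases from
  \<open>\<psi>(0) = 2\<close> on \<open>[0, 1)\<close> as long as \<open>0 \<le> a - 1 \<le> 2\<close>; this is where \<open>2 \<le> z \<le> 4\<close> is used.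
  Hence for \<open>c a \<le> 1\<close> the potential strictly decreases from \<open>\<phi>(0) = 0\<close> and has no positive root.
  For \<open>c a > 1\<close> it first increases and tends to \<open>-\<infinity>\<close> at \<open>1\<close>, so it has a root in \<open>(0, 1)\<close>;
  two such roots \<open>r\<^sub>1 < r\<^sub>2\<close> would, by Rolle's theorem on \<open>[0, r\<^sub>1]\<close> and \<open>[r\<^sub>1, r\<^sub>2]\<close>, give two
  critical points where \<open>c a \<psi> = 2\<close>, contradicting the monotonicity of \<open>\<psi>\<close>. The threshold
  \<open>c a = 1\<close> means \<open>\<beta>\<^sub>1 = 2 powr (z - 1) / (z - 1)\<close>.
\<close>

definition mf_psi :: "real \<Rightarrow> real \<Rightarrow> real" where
  "mf_psi b u = (1 - u\<^sup>2) * ((1 + u) powr b + (1 - u) powr b)"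

definition mf_potential :: "real \<Rightarrow> real \<Rightarrow> real \<Rightarrow> real" where
  "mf_potential c a u = c * ((1 + u) powr a - (1 - u) powr a) - ln (1 + u) + ln (1 - u)"

lemma mf_psi_0 [simp]: "mf_psi b 0 = 2"
  by (simp add: mf_psi_def)

lemma mf_potential_0 [simp]: "mf_potential c a 0 = 0"
  by (simp add: mf_potential_def)

lemma has_real_derivative_mf_psi:
  fixes x :: real
  assumes "-1 < x" "x < 1"
  shows "(mf_psi b has_real_derivative
           (1 + x) powr b * (b - (b + 2) * x) - (1 - x) powr b * (b + (b + 2) * x)) (at x)"
proof -
  have plus: "(1 + x) powr (b - 1) * (1 - x\<^sup>2) = (1 - x) * (1 + x) powr b"
    and minus: "(1 - x) powr (b - 1) * (1 - x\<^sup>2) = (1 + x) * (1 - x) powr b"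
    using assms by (simp_all add: powr_diff power2_eq_square field_simps)
  have "(mf_psi b has_real_derivative
          -2 * x * ((1 + x) powr b + (1 - x) powr b)
          + b * ((1 + x) powr (b - 1) * (1 - x\<^sup>2)) - b * ((1 - x) powr (b - 1) * (1 - x\<^sup>2))) (at x)"
    unfolding mf_psi_def[abs_def] using assms
    by (auto intro!: derivative_eq_intros simp: algebra_simps)
  then show ?thesis
    unfolding plus minus by (simp add: algebra_simps)
qed

lemma ln_inequality_mf_psi_deriv:
  fixes b u :: real
  assumes b: "0 < b" "b \<le> 2" and u: "0 < u" "(b + 2) * u < b"
  shows "b * ln (1 + u) + ln (b - (b + 2) * u) < ln (b + (b + 2) * u) + b * ln (1 - u)"
proof -
  define L where "L t = ln (b + (b + 2) * t) - ln (b - (b + 2) * t) - b * ln (1 + t) + b * ln (1 - t)"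
    for t
  define L' where "L' t = (b + 2) / (b + (b + 2) * t) + (b + 2) / (b - (b + 2) * t) - b / (1 + t) - b / (1 - t)"
    for t
  have bounds: "0 < b - (b + 2) * t" "0 < b + (b + 2) * t" "t < 1" if "0 \<le> t" "t \<le> u" for t
  proof -
    have "(b + 2) * t \<le> (b + 2) * u" "0 \<le> (b + 2) * t"
      using that b by (auto intro: mult_left_mono)
    moreover have "u < 1"
      using u b mult_le_cancel_left1[of "b + 2" u] by linarith
    ultimately show "0 < b - (b + 2) * t" "0 < b + (b + 2) * t" "t < 1"
      using that u b by linarith+
  qed
  have deriv: "(L has_real_derivative L' t) (at t)" if "0 \<le> t" "t \<le> u" for t
    unfolding L_def[abs_def] L'_def using bounds[OF that] that
    by (auto intro!: derivative_eq_intros) (simp add: field_simps)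
  have deriv_pos: "0 < L' t" if "0 < t" "t < u" for t
  proof -
    have r: "0 < b - (b + 2) * t" "0 < b + (b + 2) * t" "t < 1"
      using bounds[of t] that by auto
    have "(b + (b + 2) * t) * (b - (b + 2) * t) < (b + 2) * ((1 + t) * (1 - t))"
    proof -
      have "(b + 2) * ((1 + t) * (1 - t)) - (b + (b + 2) * t) * (b - (b + 2) * t)
            = (2 - b) * (1 + b) + t\<^sup>2 * ((b + 2) * (b + 1))"
        by (simp add: algebra_simps power2_eq_square)
      moreover have "0 \<le> (2 - b) * (1 + b)" "0 < t\<^sup>2 * ((b + 2) * (b + 1))"
        using b that by simp_all
      ultimately show ?thesis by linarith
    qed
    then have "2 * b * (b + 2) / ((b + 2) * ((1 + t) * (1 - t)))
               < 2 * b * (b + 2) / ((b + (b + 2) * t) * (b - (b + 2) * t))"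
      using r that b by (intro divide_strict_left_mono) auto
    moreover have "(b + 2) / (b + (b + 2) * t) + (b + 2) / (b - (b + 2) * t)
                   = 2 * b * (b + 2) / ((b + (b + 2) * t) * (b - (b + 2) * t))"
      using r that by (simp add: field_simps)
    moreover have "b / (1 + t) + b / (1 - t) = 2 * b * (b + 2) / ((b + 2) * ((1 + t) * (1 - t)))"
    proof -
      have "b / (1 + t) + b / (1 - t) = 2 * b / ((1 + t) * (1 - t))"
        using r that by (simp add: field_simps)
      also have "\<dots> = 2 * b * (b + 2) / ((b + 2) * ((1 + t) * (1 - t)))"
        using b by (subst mult_divide_mult_cancel_left[of "b + 2", symmetric]) (simp_all add: ac_simps)
      finally show ?thesis .
    qed
    ultimately show ?thesis
      unfolding L'_def by linarith
  qed
  have "L 0 < L u"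
  proof (rule DERIV_pos_imp_increasing_open[OF u(1)])
    show "\<exists>y. (L has_real_derivative y) (at t) \<and> 0 < y" if "0 < t" "t < u" for t
      using that deriv[of t] deriv_pos[of t] by auto
    show "continuous_on {0..u} L"
      using deriv by (intro continuous_at_imp_continuous_on ballI DERIV_isCont) auto
  qed
  then show ?thesis
    unfolding L_def by simp
qed

lemma mf_psi_deriv_neg:
  fixes b x :: real
  assumes b: "0 \<le> b" "b \<le> 2" and x: "0 < x" "x < 1"
  shows "(1 + x) powr b * (b - (b + 2) * x) - (1 - x) powr b * (b + (b + 2) * x) < 0"
proof (cases "b - (b + 2) * x \<le> 0")
  case True
  have "(1 + x) powr b * (b - (b + 2) * x) \<le> 0"
    using True by (simp add: mult_nonneg_nonpos)
  moreover have "0 < (1 - x) powr b * (b + (b + 2) * x)"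
    using b x by (intro mult_pos_pos add_nonneg_pos) auto
  ultimately show ?thesis by linarith
next
  case False
  then have "0 < b"
    using b x by (cases "b = 0") auto
  with False x have pos: "0 < b - (b + 2) * x" "0 < b" "0 < b + (b + 2) * x"
    by (auto intro: add_pos_nonneg)
  then have "exp (b * ln (1 + x) + ln (b - (b + 2) * x)) < exp (ln (b + (b + 2) * x) + b * ln (1 - x))"
    using ln_inequality_mf_psi_deriv b x by simp
  then show ?thesis
    using pos x by (simp add: exp_add powr_def mult.commute)
qed

lemma mf_psi_strict_decreasing:
  assumes "0 \<le> b" "b \<le> 2" "0 \<le> x" "x < y" "y < 1"
  shows "mf_psi b y < mf_psi b x"
proof (rule DERIV_neg_imp_decreasing_open[OF \<open>x < y\<close>])
  show "continuous_on {x..y} (mf_psi b)"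
    using assms by (intro continuous_at_imp_continuous_on ballI DERIV_isCont[OF has_real_derivative_mf_psi]) auto
  show "\<exists>d. (mf_psi b has_real_derivative d) (at t) \<and> d < 0" if "x < t" "t < y" for t
    using that assms has_real_derivative_mf_psi[of t b] mf_psi_deriv_neg[of b t] by auto
qed

lemma has_real_derivative_mf_potential:
  fixes x :: real
  assumes "-1 < x" "x < 1"
  shows "(mf_potential c a has_real_derivative (c * a * mf_psi (a - 1) x - 2) / (1 - x\<^sup>2)) (at x)"
proof -
  have "0 < (1 - x) * (1 + x)"
    using assms by simp
  then have "1 - x\<^sup>2 \<noteq> 0"
    by (simp add: power2_eq_square algebra_simps)
  then show ?thesis
    unfolding mf_potential_def[abs_def] mf_psi_def using assms
    by (auto intro!: derivative_eq_intros simp: field_simps power2_eq_square)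
qed

lemma continuous_on_mf_potential:
  "S \<subseteq> {-1<..<1} \<Longrightarrow> continuous_on S (mf_potential c a)"
  by (intro continuous_at_imp_continuous_on ballI DERIV_isCont[OF has_real_derivative_mf_potential]) auto

lemma mf_potential_critical_point:
  assumes "-1 < x" "x < 1" "(mf_potential c a has_real_derivative 0) (at x)"
  shows "c * a * mf_psi (a - 1) x = 2"
proof -
  have "0 < (1 - x) * (1 + x)"
    using assms by simp
  then have "1 - x\<^sup>2 \<noteq> 0"
    by (simp add: power2_eq_square algebra_simps)
  then show ?thesis
    using DERIV_unique[OF has_real_derivative_mf_potential assms(3)] assms by simp
qed

lemma mf_eq2_iff_mf_potential:
  assumes "-1 < u" "u < 1"
  shows "mf_eq2 \<beta> z u \<longleftrightarrow> mf_potential (\<beta> / 2 powr (z - 1)) (z - 1) u = 0"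
proof -
  define D where "D = Delta2 \<beta> z u"
  have "0 < 1 + exp D"
    by (simp add: add_pos_pos)
  then have "mf_eq2 \<beta> z u \<longleftrightarrow> u * (1 + exp D) = 1 - exp D"
    unfolding mf_eq2_def D_def by (simp add: eq_divide_eq)
  also have "\<dots> \<longleftrightarrow> exp D = (1 - u) / (1 + u)"
    using assms by (auto simp: field_simps)
  also have "\<dots> \<longleftrightarrow> D = ln ((1 - u) / (1 + u))"
  proof -
    have "0 < (1 - u) / (1 + u)"
      using assms by simp
    then show ?thesis
      by (metis exp_ln ln_exp)
  qed
  also have "\<dots> \<longleftrightarrow> D = ln (1 - u) - ln (1 + u)"
    using assms by (simp add: ln_div)
  also have "\<dots> \<longleftrightarrow> mf_potential (\<beta> / 2 powr (z - 1)) (z - 1) u = 0"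
    unfolding D_def Delta2_def mf_potential_def by (auto simp: algebra_simps)
  finally show ?thesis .
qed

lemma mf_potential_neg:
  assumes a: "0 \<le> a - 1" "a - 1 \<le> 2" and ca: "0 < c * a" "c * a \<le> 1" and u: "0 < u" "u < 1"
  shows "mf_potential c a u < 0"
proof -
  have "mf_potential c a u < mf_potential c a 0"
  proof (rule DERIV_neg_imp_decreasing_open[OF u(1)])
    show "continuous_on {0..u} (mf_potential c a)"
      using u by (intro continuous_on_mf_potential) auto
    show "\<exists>y. (mf_potential c a has_real_derivative y) (at t) \<and> y < 0" if t: "0 < t" "t < u" for t
    proof -
      have "mf_psi (a - 1) t < 2"
        using mf_psi_strict_decreasing[of "a - 1" 0 t] a t u by simp
      then have "c * a * mf_psi (a - 1) t < 2"
        using ca mult_strict_left_mono[of "mf_psi (a - 1) t" 2 "c * a"] by linarith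
      moreover have "0 < (1 - t) * (1 + t)"
        using t u by simp
      ultimately have "(c * a * mf_psi (a - 1) t - 2) / (1 - t\<^sup>2) < 0"
        by (simp add: divide_neg_pos power2_eq_square algebra_simps)
      then show ?thesis
        using has_real_derivative_mf_potential[of t c a] t u by auto
    qed
  qed
  then show ?thesis
    by simp
qed

lemma mf_potential_root_exists:
  assumes ca: "1 < c * a" and "0 < c" "0 < a"
  shows "\<exists>r. 0 < r \<and> r < 1 \<and> mf_potential c a r = 0"
proof -
  define v where "v = 1 - exp (- (c * 2 powr a + 1))"
  have "0 \<le> c * 2 powr a"
    using assms by simp
  then have v: "0 < v" "v < 1"
    unfolding v_def by auto
  have "mf_potential c a v \<le> -1"
  proof -
    have "c * (1 + v) powr a \<le> c * 2 powr a"
      using v assms by (intro mult_left_mono powr_mono2) auto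
    moreover have "0 \<le> c * (1 - v) powr a" "0 \<le> ln (1 + v)"
      using v assms by simp_all
    moreover have "ln (1 - v) = - (c * 2 powr a + 1)"
      unfolding v_def by simp
    ultimately show ?thesis
      unfolding mf_potential_def by (simp add: algebra_simps)
  qed
  have "0 < (c * a * mf_psi (a - 1) 0 - 2) / (1 - 0\<^sup>2)"
    using ca by simp
  then obtain d where d: "0 < d" "\<And>h. 0 < h \<Longrightarrow> h < d \<Longrightarrow> mf_potential c a 0 < mf_potential c a (0 + h)"
    using DERIV_pos_inc_right[OF has_real_derivative_mf_potential[of 0 c a]] by auto
  define h where "h = min (d / 2) (v / 2)"
  have h: "0 < h" "h < v" "0 < mf_potential c a h"
    using d v unfolding h_def by auto
  have "continuous_on {h..v} (mf_potential c a)"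
    using h v by (auto intro!: continuous_on_mf_potential)
  then obtain r where "h \<le> r" "r \<le> v" "mf_potential c a r = 0"
    using IVT2'[of "mf_potential c a" v 0 h] h \<open>mf_potential c a v \<le> -1\<close> by auto
  with h v show ?thesis
    by (intro exI[of _ r]) auto
qed

lemma mf_potential_root_unique:
  assumes a: "0 \<le> a - 1" "a - 1 \<le> 2" and ca: "c * a \<noteq> 0"
    and r: "0 < r\<^sub>1" "r\<^sub>1 < 1" "0 < r\<^sub>2" "r\<^sub>2 < 1"
    and roots: "mf_potential c a r\<^sub>1 = 0" "mf_potential c a r\<^sub>2 = 0"
  shows "r\<^sub>1 = r\<^sub>2"
proof (rule ccontr)
  assume "r\<^sub>1 \<noteq> r\<^sub>2"
  define s t where "s = min r\<^sub>1 r\<^sub>2" and "t = max r\<^sub>1 r\<^sub>2"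
  have st: "0 < s" "s < t" "t < 1" "mf_potential c a s = 0" "mf_potential c a t = 0"
    using r roots \<open>r\<^sub>1 \<noteq> r\<^sub>2\<close> unfolding s_def t_def by (auto simp: min_def max_def)
  have differentiable: "mf_potential c a differentiable (at x)" if "0 < x" "x < 1" for x
    using has_real_derivative_mf_potential[of x] that real_differentiable_def by fastforce
  have continuous: "continuous_on {0..s} (mf_potential c a)" "continuous_on {s..t} (mf_potential c a)"
    using st by (auto intro!: continuous_on_mf_potential)
  obtain \<xi>\<^sub>1 where \<xi>\<^sub>1: "0 < \<xi>\<^sub>1" "\<xi>\<^sub>1 < s" "(mf_potential c a has_real_derivative 0) (at \<xi>\<^sub>1)"
    using Rolle[OF st(1) _ continuous(1)] st differentiable by auto
  obtain \<xi>\<^sub>2 where \<xi>\<^sub>2: "s < \<xi>\<^sub>2" "\<xi>\<^sub>2 < t" "(mf_potential c a has_real_derivative 0) (at \<xi>\<^sub>2)"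
    using Rolle[OF st(2) _ continuous(2)] st differentiable by auto
  have "c * a * mf_psi (a - 1) \<xi>\<^sub>1 = 2" "c * a * mf_psi (a - 1) \<xi>\<^sub>2 = 2"
    using \<xi>\<^sub>1 \<xi>\<^sub>2 st by (auto intro!: mf_potential_critical_point)
  moreover have "mf_psi (a - 1) \<xi>\<^sub>2 < mf_psi (a - 1) \<xi>\<^sub>1"
    using \<xi>\<^sub>1 \<xi>\<^sub>2 st a by (intro mf_psi_strict_decreasing) auto
  ultimately show False
    using ca by (metis less_irrefl mult_left_cancel)
qed

lemma mf_potential_ex1_root:
  assumes a: "0 \<le> a - 1" "a - 1 \<le> 2" and "0 < c" "1 < c * a"
  shows "\<exists>!r. 0 < r \<and> r < 1 \<and> mf_potential c a r = 0"
proof -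
  obtain r where r: "0 < r" "r < 1" "mf_potential c a r = 0"
    using mf_potential_root_exists assms by fastforce
  moreover have "u = r" if "0 < u \<and> u < 1 \<and> mf_potential c a u = 0" for u
    using mf_potential_root_unique[OF a, of c u r] that r assms by auto
  ultimately show ?thesis
    by blast
qed

theorem lemma5p6:
  fixes z :: real
  assumes "2 \<le> z" and "z \<le> 4"
  shows "\<exists>\<beta>1 > 0. \<forall>\<beta> > 0.
           (\<beta> \<le> \<beta>1 \<longrightarrow> {u \<in> {0..<1}. mf_eq2 \<beta> z u} = {0}) \<and>
           (\<beta>1 < \<beta> \<longrightarrow> (\<exists>!u1. 0 < u1 \<and> u1 < 1 \<and> mf_eq2 \<beta> z u1))"
proof -
  define a where "a = z - 1"
  have a: "0 \<le> a - 1" "a - 1 \<le> 2" "0 < a"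
    using assms unfolding a_def by auto
  have \<beta>\<^sub>1: "0 < 2 powr a / a"
    using a by simp
  show ?thesis
  proof (intro exI[of _ "2 powr a / a"] conjI allI impI \<beta>\<^sub>1)
    fix \<beta> :: real
    assume "0 < \<beta>"
    define c where "c = \<beta> / 2 powr a"
    have c: "0 < c" "c * a = \<beta> / (2 powr a / a)"
      using \<open>0 < \<beta>\<close> a unfolding c_def by (auto simp: field_simps)
    have roots: "mf_eq2 \<beta> z u \<longleftrightarrow> mf_potential c a u = 0" if "-1 < u" "u < 1" for u
      using mf_eq2_iff_mf_potential[OF that] unfolding a_def c_def by simp
    show "{u \<in> {0..<1}. mf_eq2 \<beta> z u} = {0}" if "\<beta> \<le> 2 powr a / a"
    proof -
      have "0 < c * a" "c * a \<le> 1"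
        unfolding c(2) using \<open>0 < \<beta>\<close> \<beta>\<^sub>1 that by (simp_all only: divide_pos_pos divide_le_eq_1_pos)
      then show ?thesis
        using mf_potential_neg[OF a(1,2)] roots by (fastforce simp: less_le)
    qed
    show "\<exists>!u1. 0 < u1 \<and> u1 < 1 \<and> mf_eq2 \<beta> z u1" if "2 powr a / a < \<beta>"
    proof -
      have "1 < c * a"
        unfolding c(2) using \<beta>\<^sub>1 that by (simp only: less_divide_eq_1_pos)
      moreover have "(0 < u \<and> u < 1 \<and> mf_eq2 \<beta> z u) \<longleftrightarrow> (0 < u \<and> u < 1 \<and> mf_potential c a u = 0)" for u
        using roots[of u] by auto
      ultimately show ?thesis
        using mf_potential_ex1_root[OF a(1,2) c(1)] by simp
    qed
  qed
qed

end
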